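(* Let $\langle L,\leq\rangle$, $\langle K,\leq\rangle$ be complete lattices, $f:L\to K$ a surjective lattice morphism, and $O:L\to L$ an operator that respects $f$, with projection $O_f:K\to K$. If $O$ and $O_f$ are monotone, then $f(\mathrm{lfp}(O))=\mathrm{lfp}(O_f)$.
   Context: A lattice morphism satisfies $f(\bigvee X)=\bigvee f(X)$ and $f(\bigwedge X)=\bigwedge f(X)$ for all $X\subseteq L$. $O$ respects $f$ if $f(x)=f(y)$ implies $f(O(x))=f(O(y))$; $O_f$ is the unique operator on $K$ with $O_f\circ f=f\circ O$. $\mathrm{lfp}$ denotes the least fixpoint. *)

theory Defs
  imports Main
begin

definition lattice_morphism :: "('a::complete_lattice \<Rightarrow> 'b::complete_lattice) \<Rightarrow> bool" where
  "lattice_morphism f \<longleftrightarrow> (\<forall>X. f (Sup X) = Sup (f ` X) \<and> f (Inf X) = Inf (f ` X))"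

definition respects_op :: "('a \<Rightarrow> 'a) \<Rightarrow> ('a \<Rightarrow> 'b) \<Rightarrow> bool" where
  "respects_op Op f \<longleftrightarrow> (\<forall>x y. f x = f y \<longrightarrow> f (Op x) = f (Op y))"

end

theory Submission
  imports Defs
begin

text \<open>The image under \<open>f\<close> of a fixpoint of \<open>Op\<close> is a fixpoint of \<open>Of\<close>, giving one
  inequality; the other follows by transfinite induction over the iterates of \<open>Op\<close>, since
  \<open>f\<close> carries each successor step to a step of \<open>Of\<close> and each limit to a supremum.\<close>

lemma lfp_le_image_lfp:
  assumes "mono Op" and "\<And>x. Of (f x) = f (Op x)"
  shows "lfp Of \<le> f (lfp Op)"
  by (rule lfp_lowerbound) (metis assms lfp_fixpoint order_refl)

lemma image_lfp_le_lfp: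
  fixes f :: "'a::complete_lattice \<Rightarrow> 'b::complete_lattice"
  assumes "mono Op" and "mono Of" and "\<And>x. Of (f x) = f (Op x)"
    and Sup_preserving: "\<And>M. f (Sup M) = Sup (f ` M)"
  shows "f (lfp Op) \<le> lfp Of"
proof (induction rule: lfp_ordinal_induct[OF \<open>mono Op\<close>])
  case (1 S)
  then have "Of (f S) \<le> Of (lfp Of)"
    using \<open>mono Of\<close> by (simp add: monoD)
  then show ?case
    by (simp add: assms(3) lfp_fixpoint[OF \<open>mono Of\<close>])
next
  case (2 M)
  then show ?case
    by (simp add: Sup_preserving SUP_least)
qed

theorem lemmaA2:
  fixes f :: "'a::complete_lattice \<Rightarrow> 'b::complete_lattice"
    and Op :: "'a \<Rightarrow> 'a" and Of :: "'b \<Rightarrow> 'b"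
  assumes "surj f"
    and "lattice_morphism f"
    and "respects_op Op f"
    and "Of \<circ> f = f \<circ> Op"
    and "mono Op" and "mono Of"
  shows "f (lfp Op) = lfp Of"
proof (rule antisym)
  have commute: "\<And>x. Of (f x) = f (Op x)"
    using \<open>Of \<circ> f = f \<circ> Op\<close> by (metis comp_apply)
  have "\<And>M. f (Sup M) = Sup (f ` M)"
    using \<open>lattice_morphism f\<close> by (simp add: lattice_morphism_def)
  with \<open>mono Op\<close> \<open>mono Of\<close> commute show "f (lfp Op) \<le> lfp Of"
    by (rule image_lfp_le_lfp)
  from \<open>mono Op\<close> commute show "lfp Of \<le> f (lfp Op)"
    by (rule lfp_le_image_lfp)
qed

end
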